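(* Let $S$ be a group and $G,H$ subgroups of $S$ such that the cyclic $S$-acts $\overline{G}=S/G$ and $\overline{H}=S/H$ are geometrically equivalent. Then there exist $\alpha,\beta\in S$ such that $\alpha^{-1}G\alpha\subseteq H$ and $\beta^{-1}H\beta\subseteq G$.
   Context: A left $S$-act is a nonempty set with an action $S\times A\to A$ satisfying $1a=a$, $(st)a=s(ta)$; homomorphisms preserve the action. For a nonempty finite set $X$, $F_X=\coprod_{x\in X}S_x$ is the free $S$-act on $X$. For an $S$-act $G'$ and a relation $T\subseteq F_X\times F_X$, $T'_{G'}=\{\mu:F_X\to G' \text{ homomorphism}: T\subseteq\ker\mu\}$ and $T''_{G'}=\bigcap_{\mu\in T'_{G'}}\ker\mu$ (empty intersection $=F_X\times F_X$). $S$-acts $G_1,G_2$ are geometrically equivalent iff $T''_{G_1}=T''_{G_2}$ for all nonempty finite $X$ and all $T\subseteq F_X\times F_X$. For a subgroup $K$ of $S$, $\overline{K}=S/K$ is the $S$-act of left cosets with $s\cdot tK=stK$. *)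

theory Defs
  imports "HOL-Algebra.Coset"
begin

definition is_act :: "('g, 'b) monoid_scheme \<Rightarrow> 'a set \<Rightarrow> ('g \<Rightarrow> 'a \<Rightarrow> 'a) \<Rightarrow> bool" where
  "is_act S A act \<longleftrightarrow> A \<noteq> {}
     \<and> (\<forall>s\<in>carrier S. \<forall>a\<in>A. act s a \<in> A)
     \<and> (\<forall>a\<in>A. act \<one>\<^bsub>S\<^esub> a = a)
     \<and> (\<forall>s\<in>carrier S. \<forall>t\<in>carrier S. \<forall>a\<in>A. act (s \<otimes>\<^bsub>S\<^esub> t) a = act s (act t a))"

definition act_hom :: "('g, 'b) monoid_scheme \<Rightarrow> 'a set \<Rightarrow> ('g \<Rightarrow> 'a \<Rightarrow> 'a)
    \<Rightarrow> 'c set \<Rightarrow> ('g \<Rightarrow> 'c \<Rightarrow> 'c) \<Rightarrow> ('a \<Rightarrow> 'c) \<Rightarrow> bool" where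
  "act_hom S A f B g \<mu> \<longleftrightarrow> (\<forall>a\<in>A. \<mu> a \<in> B) \<and> (\<forall>s\<in>carrier S. \<forall>a\<in>A. \<mu> (f s a) = g s (\<mu> a))"

text \<open>Free S-act on X: the disjoint union of copies S_x; element (x,s) stands for s in S_x.\<close>
definition free_act :: "('g, 'b) monoid_scheme \<Rightarrow> 'x set \<Rightarrow> ('x \<times> 'g) set" where
  "free_act S X = X \<times> carrier S"

definition free_action :: "('g, 'b) monoid_scheme \<Rightarrow> 'g \<Rightarrow> ('x \<times> 'g) \<Rightarrow> ('x \<times> 'g)" where
  "free_action S s p = (fst p, s \<otimes>\<^bsub>S\<^esub> snd p)"

definition act_ker :: "'a set \<Rightarrow> ('a \<Rightarrow> 'c) \<Rightarrow> ('a \<times> 'a) set" where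
  "act_ker A \<mu> = {(p, q). p \<in> A \<and> q \<in> A \<and> \<mu> p = \<mu> q}"

text \<open>T'' with respect to the act (B, g): intersection of kernels of all homomorphisms
  F_X \<rightarrow> B whose kernel contains T (empty intersection = F_X \<times> F_X).\<close>
definition rel_closure :: "('g, 'b) monoid_scheme \<Rightarrow> 'c set \<Rightarrow> ('g \<Rightarrow> 'c \<Rightarrow> 'c)
    \<Rightarrow> 'x set \<Rightarrow> (('x \<times> 'g) \<times> ('x \<times> 'g)) set \<Rightarrow> (('x \<times> 'g) \<times> ('x \<times> 'g)) set" where
  "rel_closure S B g X T =
     {(p, q). p \<in> free_act S X \<and> q \<in> free_act S X \<and>
        (\<forall>\<mu>. act_hom S (free_act S X) (free_action S) B g \<mu> \<and> T \<subseteq> act_ker (free_act S X) \<mu>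
              \<longrightarrow> \<mu> p = \<mu> q)}"

text \<open>Geometric equivalence; finite sets X are taken as finite sets of naturals
  (every finite set is in bijection with one).\<close>
definition geom_equiv :: "('g, 'b) monoid_scheme \<Rightarrow> 'a set \<Rightarrow> ('g \<Rightarrow> 'a \<Rightarrow> 'a)
    \<Rightarrow> 'c set \<Rightarrow> ('g \<Rightarrow> 'c \<Rightarrow> 'c) \<Rightarrow> bool" where
  "geom_equiv S A f B g \<longleftrightarrow>
     (\<forall>X :: nat set. finite X \<and> X \<noteq> {} \<longrightarrow>
        (\<forall>T. T \<subseteq> free_act S X \<times> free_act S X \<longrightarrow> rel_closure S A f X T = rel_closure S B g X T))"

definition coset_act :: "('g, 'b) monoid_scheme \<Rightarrow> 'g set \<Rightarrow> 'g set set" where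
  "coset_act S K = {x <#\<^bsub>S\<^esub> K | x. x \<in> carrier S}"

definition coset_action :: "('g, 'b) monoid_scheme \<Rightarrow> 'g \<Rightarrow> 'g set \<Rightarrow> 'g set" where
  "coset_action S s C = s <#\<^bsub>S\<^esub> C"

end

theory Submission
  imports Defs "HOL-Algebra.Left_Coset"
begin

text \<open>
  The relations \<open>k x = x\<close> (\<open>k \<in> G\<close>) on one generator \<open>x\<close> hold in \<open>S/G\<close> at \<open>x = G\<close>,
  and a solution \<open>x = aH\<close> in \<open>S/H\<close> means exactly \<open>a\<inverse> G a \<subseteq> H\<close>. If there is no such
  solution, their closure over \<open>S/H\<close> is everything, hence so is their closure over \<open>S/G\<close>,
  which forces \<open>G = S\<close>; then \<open>S/G\<close> is a point, every relation is closed over it, and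
  geometric equivalence forces \<open>H = S\<close> as well.
\<close>

lemma act_hom_free_act_generator:
  assumes "monoid S" and "act_hom S (free_act S X) (free_action S) B act \<mu>"
    and "x \<in> X" and "s \<in> carrier S"
  shows "\<mu> (x, s) = act s (\<mu> (x, \<one>\<^bsub>S\<^esub>))"
proof -
  interpret monoid S by fact
  have "\<mu> (free_action S s (x, \<one>\<^bsub>S\<^esub>)) = act s (\<mu> (x, \<one>\<^bsub>S\<^esub>))"
    using assms(2-4) unfolding act_hom_def free_act_def by auto
  then show ?thesis
    using assms(4) by (simp add: free_action_def)
qed

lemma act_hom_free_act_coset_act:
  assumes "group S" and "subgroup K S"
  shows "act_hom S (free_act S X) (free_action S) (coset_act S K) (coset_action S)
           (\<lambda>p. snd p <#\<^bsub>S\<^esub> K)"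
proof -
  interpret group S by fact
  show ?thesis
    using subgroup.subset[OF assms(2)]
    unfolding act_hom_def free_act_def free_action_def coset_act_def coset_action_def
    by (auto simp: lcos_m_assoc)
qed

lemma rel_closure_eq_full:
  assumes "\<nexists>\<mu>. act_hom S (free_act S X) (free_action S) B act \<mu> \<and> T \<subseteq> act_ker (free_act S X) \<mu>"
  shows "rel_closure S B act X T = free_act S X \<times> free_act S X"
  using assms unfolding rel_closure_def by auto

lemma rel_closure_singleton_act:
  "rel_closure S {b} act X T = free_act S X \<times> free_act S X"
  unfolding rel_closure_def act_hom_def by auto

lemma coset_act_carrier:
  assumes "group S"
  shows "coset_act S (carrier S) = {carrier S}"
proof -
  interpret group S by fact
  show ?thesis
    unfolding coset_act_def using coset_join3[OF _ subgroup_self] by auto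
qed

lemma rel_closure_coset_act_full_imp_carrier:
  assumes "group S" and "subgroup K S" and "x \<in> X"
    and "T \<subseteq> act_ker (free_act S X) (\<lambda>p. snd p <#\<^bsub>S\<^esub> K)"
    and full: "rel_closure S (coset_act S K) (coset_action S) X T = free_act S X \<times> free_act S X"
  shows "K = carrier S"
proof -
  interpret group S by fact
  have "s \<in> K" if s: "s \<in> carrier S" for s
  proof -
    have "((x, s), (x, \<one>\<^bsub>S\<^esub>)) \<in> rel_closure S (coset_act S K) (coset_action S) X T"
      unfolding full free_act_def using assms(3) s by blast
    then have "\<forall>\<mu>. act_hom S (free_act S X) (free_action S) (coset_act S K) (coset_action S) \<mu>
        \<and> T \<subseteq> act_ker (free_act S X) \<mu> \<longrightarrow> \<mu> (x, s) = \<mu> (x, \<one>\<^bsub>S\<^esub>)"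
      unfolding rel_closure_def by blast
    then have "(\<lambda>p. snd p <#\<^bsub>S\<^esub> K) (x, s) = (\<lambda>p. snd p <#\<^bsub>S\<^esub> K) (x, \<one>\<^bsub>S\<^esub>)"
      using assms(4) act_hom_free_act_coset_act[OF assms(1,2)] by blast
    then have "s <#\<^bsub>S\<^esub> K = K"
      using lcos_mult_one[OF subgroup.subset[OF assms(2)]] by simp
    then show ?thesis
      using lcos_self[OF s assms(2)] by simp
  qed
  then show ?thesis
    using subgroup.subset[OF assms(2)] by blast
qed

lemma act_hom_coset_act_conj_subset:
  assumes "group S" and "G \<subseteq> carrier S" and "subgroup H S" and "x \<in> X"
    and hom: "act_hom S (free_act S X) (free_action S) (coset_act S H) (coset_action S) \<mu>"
    and fix_x: "\<forall>g\<in>G. \<mu> (x, g) = \<mu> (x, \<one>\<^bsub>S\<^esub>)"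
  shows "\<exists>a\<in>carrier S. (\<lambda>g. inv\<^bsub>S\<^esub> a \<otimes>\<^bsub>S\<^esub> g \<otimes>\<^bsub>S\<^esub> a) ` G \<subseteq> H"
proof -
  interpret group S by fact
  interpret H: subgroup H S by fact
  have "\<mu> (x, \<one>\<^bsub>S\<^esub>) \<in> coset_act S H"
    using hom assms(4) unfolding act_hom_def free_act_def by auto
  then obtain a where a: "a \<in> carrier S" and \<mu>_one: "\<mu> (x, \<one>\<^bsub>S\<^esub>) = a <#\<^bsub>S\<^esub> H"
    unfolding coset_act_def by auto
  have "inv\<^bsub>S\<^esub> a \<otimes>\<^bsub>S\<^esub> g \<otimes>\<^bsub>S\<^esub> a \<in> H" if g: "g \<in> G" for g
  proof -
    have gc: "g \<in> carrier S" using g assms(2) by blast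
    have "(g \<otimes>\<^bsub>S\<^esub> a) <#\<^bsub>S\<^esub> H = a <#\<^bsub>S\<^esub> H"
      using fix_x g act_hom_free_act_generator[OF monoid_axioms hom assms(4) gc]
      by (simp add: \<mu>_one coset_action_def lcos_m_assoc a gc H.subset)
    then have "g \<otimes>\<^bsub>S\<^esub> a \<in> a <#\<^bsub>S\<^esub> H"
      using lcos_self[OF _ assms(3), of "g \<otimes>\<^bsub>S\<^esub> a"] a gc by simp
    then show ?thesis
      using H.lcos_module_imp[OF is_group a] a gc by (simp add: m_assoc)
  qed
  then show ?thesis using a by blast
qed

lemma geom_equiv_sym:
  "geom_equiv S A f B g \<Longrightarrow> geom_equiv S B g A f"
  unfolding geom_equiv_def by metis

lemma geom_equiv_rel_closure_eq:
  fixes X :: "nat set"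
  assumes "geom_equiv S A f B g" and "finite X" and "X \<noteq> {}"
    and "T \<subseteq> free_act S X \<times> free_act S X"
  shows "rel_closure S A f X T = rel_closure S B g X T"
  using assms unfolding geom_equiv_def by metis

lemma geom_equiv_coset_act_carrier:
  assumes "group S" and "subgroup H S"
    and "geom_equiv S (coset_act S (carrier S)) (coset_action S) (coset_act S H) (coset_action S)"
  shows "H = carrier S"
proof (rule rel_closure_coset_act_full_imp_carrier[OF assms(1,2) insertI1 empty_subsetI])
  have "rel_closure S (coset_act S H) (coset_action S) {0::nat} {}
      = rel_closure S (coset_act S (carrier S)) (coset_action S) {0} {}"
    using geom_equiv_rel_closure_eq[OF assms(3) finite.insertI[OF finite.emptyI] insert_not_empty empty_subsetI]
    by (rule sym)
  also have "\<dots> = free_act S {0} \<times> free_act S {0}"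
    by (subst coset_act_carrier[OF assms(1)]) (rule rel_closure_singleton_act)
  finally show "rel_closure S (coset_act S H) (coset_action S) {0::nat} {} = free_act S {0} \<times> free_act S {0}" .
qed

text \<open>The pair \<open>((0, k), (0, \<one>))\<close> is the relation \<open>k x = x\<close> on the generator \<open>x = (0, \<one>)\<close>.\<close>

definition fixing_relation :: "('g, 'b) monoid_scheme \<Rightarrow> 'g set \<Rightarrow> ((nat \<times> 'g) \<times> (nat \<times> 'g)) set" where
  "fixing_relation S K = {((0, k), (0, \<one>\<^bsub>S\<^esub>)) | k. k \<in> K}"

lemma fixing_relation_subset_ker_coset:
  assumes "group S" and "subgroup K S"
  shows "fixing_relation S K \<subseteq> act_ker (free_act S {0}) (\<lambda>p. snd p <#\<^bsub>S\<^esub> K)"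
proof
  interpret group S by fact
  fix z assume "z \<in> fixing_relation S K"
  then obtain k where k: "k \<in> K" and z: "z = ((0, k), (0, \<one>\<^bsub>S\<^esub>))"
    unfolding fixing_relation_def by blast
  have kc: "k \<in> carrier S"
    using k subgroup.subset[OF assms(2)] by blast
  have "k <#\<^bsub>S\<^esub> K = \<one>\<^bsub>S\<^esub> <#\<^bsub>S\<^esub> K"
    using coset_join3[OF kc assms(2) k] lcos_mult_one[OF subgroup.subset[OF assms(2)]] by simp
  then show "z \<in> act_ker (free_act S {0}) (\<lambda>p. snd p <#\<^bsub>S\<^esub> K)"
    unfolding z act_ker_def free_act_def using kc by simp
qed

lemma geom_equiv_coset_act_conj_subset:
  assumes "group S" and "subgroup G S" and "subgroup H S"
    and equiv: "geom_equiv S (coset_act S G) (coset_action S) (coset_act S H) (coset_action S)"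
  shows "\<exists>a\<in>carrier S. (\<lambda>g. inv\<^bsub>S\<^esub> a \<otimes>\<^bsub>S\<^esub> g \<otimes>\<^bsub>S\<^esub> a) ` G \<subseteq> H"
proof -
  interpret group S by fact
  let ?F = "free_act S {0}"
  consider \<mu> where "act_hom S ?F (free_action S) (coset_act S H) (coset_action S) \<mu>"
      and "fixing_relation S G \<subseteq> act_ker ?F \<mu>"
    | "\<nexists>\<mu>. act_hom S ?F (free_action S) (coset_act S H) (coset_action S) \<mu>
          \<and> fixing_relation S G \<subseteq> act_ker ?F \<mu>"
    by blast
  then show ?thesis
  proof cases
    case (1 \<mu>)
    then have "\<forall>g\<in>G. \<mu> (0, g) = \<mu> (0, \<one>\<^bsub>S\<^esub>)"
      unfolding fixing_relation_def act_ker_def by blast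
    then show ?thesis
      using act_hom_coset_act_conj_subset[OF assms(1) subgroup.subset[OF assms(2)] assms(3) insertI1 1(1)]
      by blast
  next
    case 2
    have ker: "fixing_relation S G \<subseteq> act_ker ?F (\<lambda>p. snd p <#\<^bsub>S\<^esub> G)"
      by (rule fixing_relation_subset_ker_coset[OF assms(1,2)])
    then have "fixing_relation S G \<subseteq> ?F \<times> ?F"
      by (force simp: act_ker_def)
    then have "rel_closure S (coset_act S G) (coset_action S) {0} (fixing_relation S G)
        = rel_closure S (coset_act S H) (coset_action S) {0} (fixing_relation S G)"
      by (rule geom_equiv_rel_closure_eq[OF equiv finite.insertI[OF finite.emptyI] insert_not_empty])
    also have "\<dots> = ?F \<times> ?F"
      by (rule rel_closure_eq_full[OF 2])
    finally have "G = carrier S"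
      by (rule rel_closure_coset_act_full_imp_carrier[OF assms(1,2) insertI1 ker])
    then have "H = carrier S"
      using geom_equiv_coset_act_carrier[OF assms(1,3)] equiv by simp
    then have "(\<lambda>g. inv\<^bsub>S\<^esub> \<one>\<^bsub>S\<^esub> \<otimes>\<^bsub>S\<^esub> g \<otimes>\<^bsub>S\<^esub> \<one>\<^bsub>S\<^esub>) ` G \<subseteq> H"
      using \<open>G = carrier S\<close> by auto
    then show ?thesis
      by blast
  qed
qed

theorem proposition3p9:
  fixes S :: "('g, 'b) monoid_scheme" and G H :: "'g set"
  assumes "group S" and "subgroup G S" and "subgroup H S"
    and "geom_equiv S (coset_act S G) (coset_action S) (coset_act S H) (coset_action S)"
  shows "\<exists>\<alpha>\<in>carrier S. \<exists>\<beta>\<in>carrier S.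
           (\<lambda>g. inv\<^bsub>S\<^esub> \<alpha> \<otimes>\<^bsub>S\<^esub> g \<otimes>\<^bsub>S\<^esub> \<alpha>) ` G \<subseteq> H \<and>
           (\<lambda>h. inv\<^bsub>S\<^esub> \<beta> \<otimes>\<^bsub>S\<^esub> h \<otimes>\<^bsub>S\<^esub> \<beta>) ` H \<subseteq> G"
  using geom_equiv_coset_act_conj_subset[OF assms]
    geom_equiv_coset_act_conj_subset[OF assms(1,3,2) geom_equiv_sym[OF assms(4)]]
  by blast

end
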